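(* Let $X$ be a set, let $T:\mathcal P(X)\to\mathcal P(X)$ be an order reversing quasi involution, and let $R:\mathcal P(X)\to\mathcal P(X)$ be a complemented order reversing quasi involution. Then the composition $T\circ R\circ T$ is an order reversing quasi involution, and the composition $R\circ T\circ R$ is a complemented order reversing quasi involution.
   Context: $\mathcal P(X)$ denotes the power set of $X$. A map $T:\mathcal P(X)\to\mathcal P(X)$ is an order reversing quasi involution if for all $K,L\subseteq X$: $K\subseteq TTK$, and $L\subseteq K$ implies $TK\subseteq TL$. A map $R:\mathcal P(X)\to\mathcal P(X)$ is a complemented order reversing quasi involution if for all $K,L\subseteq X$: $RRK\subseteq K$, and $L\subseteq K$ implies $RK\subseteq RL$. *)

theory Defs
  imports Main
begin

(* The ambient set X is represented by the universe of the type 'a, so that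
   P(X) is the type 'a set and maps P(X) -> P(X) are functions 'a set => 'a set. *)

definition order_reversing_quasi_involution :: "('a set \<Rightarrow> 'a set) \<Rightarrow> bool" where
  "order_reversing_quasi_involution T \<longleftrightarrow>
     (\<forall>K. K \<subseteq> T (T K)) \<and> (\<forall>K L. L \<subseteq> K \<longrightarrow> T K \<subseteq> T L)"

definition complemented_order_reversing_quasi_involution :: "('a set \<Rightarrow> 'a set) \<Rightarrow> bool" where
  "complemented_order_reversing_quasi_involution R \<longleftrightarrow>
     (\<forall>K. R (R K) \<subseteq> K) \<and> (\<forall>K L. L \<subseteq> K \<longrightarrow> R K \<subseteq> R L)"

end

theory Submission
  imports Defs
begin

text \<open>In \<open>T R T T R T K\<close> the inner \<open>T T\<close>
  only enlarges \<open>R T K\<close>; applying the antitone \<open>R\<close> and then \<open>R R \<le> id\<close> bounds the argument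
  of the outer \<open>T\<close> by \<open>T K\<close>, so the whole expression contains \<open>T T K \<supseteq> K\<close>. The claim for
  \<open>R \<circ> T \<circ> R\<close> is the order-dual argument.\<close>

lemma order_reversing_quasi_involution_iff:
  "order_reversing_quasi_involution T \<longleftrightarrow> (\<forall>K. K \<subseteq> T (T K)) \<and> antimono T"
  unfolding order_reversing_quasi_involution_def antimono_def by blast

lemma complemented_order_reversing_quasi_involution_iff:
  "complemented_order_reversing_quasi_involution R \<longleftrightarrow> (\<forall>K. R (R K) \<subseteq> K) \<and> antimono R"
  unfolding complemented_order_reversing_quasi_involution_def antimono_def by blast

lemma antimono_comp3:
  fixes f :: "'b::order \<Rightarrow> 'a::order" and g :: "'c::order \<Rightarrow> 'b" and h :: "'d::order \<Rightarrow> 'c"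
  assumes "antimono f" "antimono g" "antimono h"
  shows "antimono (f \<circ> g \<circ> h)"
proof (rule antimonoI)
  fix x y :: 'd
  assume "x \<le> y"
  then have "g (h x) \<le> g (h y)"
    using assms(2,3) by (auto dest: antimonoD)
  then show "(f \<circ> g \<circ> h) y \<le> (f \<circ> g \<circ> h) x"
    using assms(1) by (auto dest: antimonoD)
qed

lemma antimono_sandwich_extensive:
  fixes T R :: "'a::order \<Rightarrow> 'a"
  assumes "antimono T" "antimono R"
    and T_ext: "\<And>x. x \<le> T (T x)" and R_red: "\<And>x. R (R x) \<le> x"
  shows "x \<le> T (R (T (T (R (T x)))))"
proof -
  have "R (T (T (R (T x)))) \<le> R (R (T x))"
    using \<open>antimono R\<close> T_ext by (rule antimonoD)
  also have "\<dots> \<le> T x"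
    by (rule R_red)
  finally have "T (T x) \<le> T (R (T (T (R (T x)))))"
    using \<open>antimono T\<close> by (rule antimonoD[rotated])
  with T_ext show ?thesis
    by (rule order_trans)
qed

lemma antimono_sandwich_reductive:
  fixes T R :: "'a::order \<Rightarrow> 'a"
  assumes "antimono T" "antimono R"
    and T_ext: "\<And>x. x \<le> T (T x)" and R_red: "\<And>x. R (R x) \<le> x"
  shows "R (T (R (R (T (R x))))) \<le> x"
proof -
  have "R x \<le> T (T (R x))"
    by (rule T_ext)
  also have "\<dots> \<le> T (R (R (T (R x))))"
    using \<open>antimono T\<close> R_red by (rule antimonoD)
  finally have "R (T (R (R (T (R x))))) \<le> R (R x)"
    using \<open>antimono R\<close> by (rule antimonoD[rotated])
  then show ?thesis
    using R_red by (rule order_trans)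
qed

theorem lemma8p12:
  fixes T R :: "'a set \<Rightarrow> 'a set"
  assumes "order_reversing_quasi_involution T"
    and "complemented_order_reversing_quasi_involution R"
  shows "order_reversing_quasi_involution (T \<circ> R \<circ> T) \<and>
         complemented_order_reversing_quasi_involution (R \<circ> T \<circ> R)"
proof -
  from assms obtain T_ext: "\<And>K. K \<subseteq> T (T K)" and "antimono T"
    and R_red: "\<And>K. R (R K) \<subseteq> K" and "antimono R"
    unfolding order_reversing_quasi_involution_iff
      complemented_order_reversing_quasi_involution_iff by blast
  have "antimono (T \<circ> R \<circ> T)" "antimono (R \<circ> T \<circ> R)"
    using \<open>antimono T\<close> \<open>antimono R\<close> by (simp_all add: antimono_comp3)
  moreover have "K \<subseteq> (T \<circ> R \<circ> T) ((T \<circ> R \<circ> T) K)" for K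
    using antimono_sandwich_extensive[OF \<open>antimono T\<close> \<open>antimono R\<close> T_ext R_red] by simp
  moreover have "(R \<circ> T \<circ> R) ((R \<circ> T \<circ> R) K) \<subseteq> K" for K
    using antimono_sandwich_reductive[OF \<open>antimono T\<close> \<open>antimono R\<close> T_ext R_red] by simp
  ultimately show ?thesis
    unfolding order_reversing_quasi_involution_iff
      complemented_order_reversing_quasi_involution_iff by blast
qed

end
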